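(* Let $\alpha_{j-1},\alpha_j>0$, $u_{j-1},u_j\in\mathbb R$, and set $a=\alpha_j/\alpha_{j-1}$, $b=(u_j-u_{j-1})/\alpha_{j-1}$, and $K_{n,m}=2^{\frac{m-n}{2}}(m!)^{-1/2}(n!)^{1/2}$. Then for all integers $n,m\ge 0$ the entries $$\mathbb{P}^{\,j}_{n,m}=\int_{\mathbb{R}}\psi_m^{\alpha_{j-1},u_{j-1}}(v)\,\psi_n^{\alpha_j,u_j}(v)\,\omega_j(v)\,dv$$ are given by $\mathbb P^{\,j}_{n,m}=0$ if $n<m$, and, for $n\ge m$, $$\mathbb{P}^{\,j}_{n,m}=K_{n,m}\,\frac{1}{a^{m+1}}\sum_{\substack{k=m\\ k-m\ \text{even}}}^{n}\frac{1}{(n-k)!\,\big(\frac{k-m}{2}\big)!}\Big(-\frac{2b}{a}\Big)^{n-k}\Big(\frac1{a^2}-1\Big)^{\frac{k-m}{2}},$$ with the convention $0^0=1$. In particular: if $a=1$ (i.e. $\alpha_j=\alpha_{j-1}$), $\mathbb P^{\,j}_{n,m}=K_{n,m}\frac{(-2b)^{n-m}}{(n-m)!}$; if $b=0$ (i.e. $u_j=u_{j-1}$), $\mathbb P^{\,j}_{n,m}=K_{n,m}\,a^{-(m+1)}\frac{1}{((n-m)/2)!}(a^{-2}-1)^{(n-m)/2}$ for $n-m$ even and $0$ for $n-m$ odd. Consequently, for every $N_v$ the matrix $(\mathbb P^{\,j}_{n,m})_{0\le n,m\le N_v}$ is lower triangular with diagonal entries $\mathbb P^{\,j}_{n,n}=a^{-(n+1)}=(\alpha_{j-1}/\alpha_j)^{n+1}>0$,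 hence invertible.
   Context: For $\alpha>0$, $u\in\mathbb{R}$ and $n\in\mathbb{N}$, the asymmetrically weighted Hermite function is $\psi_n^{\alpha,u}(v)=(\pi 2^n n!)^{-1/2}H_n(\xi)e^{-\xi^2}$ with $\xi=(v-u)/\alpha$ and $H_n$ the $n$-th (physicists') Hermite polynomial. The weight is $\omega_j(v)=\sqrt{\pi}\,\alpha_j^{-1}e^{\xi_j^2}$ with $\xi_j=(v-u_j)/\alpha_j$. *)

theory Defs
  imports "HOL-Analysis.Analysis" "Jordan_Normal_Form.Matrix"
begin

fun hermite :: "nat \<Rightarrow> real \<Rightarrow> real" where
  "hermite 0 x = 1"
| "hermite (Suc 0) x = 2 * x"
| "hermite (Suc (Suc n)) x = 2 * x * hermite (Suc n) x - 2 * real (Suc n) * hermite n x"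

definition awh :: "real \<Rightarrow> real \<Rightarrow> nat \<Rightarrow> real \<Rightarrow> real" where
  "awh \<alpha> u n v = (let \<xi> = (v - u) / \<alpha> in
      (pi * 2 ^ n * fact n) powr (-1/2) * hermite n \<xi> * exp (- \<xi>\<^sup>2))"

definition weight :: "real \<Rightarrow> real \<Rightarrow> real \<Rightarrow> real" where
  "weight \<alpha> u v = sqrt pi / \<alpha> * exp (((v - u) / \<alpha>)\<^sup>2)"

definition Pent :: "real \<Rightarrow> real \<Rightarrow> real \<Rightarrow> real \<Rightarrow> nat \<Rightarrow> nat \<Rightarrow> real" where
  "Pent \<alpha>0 u0 \<alpha>1 u1 n m =
     integral\<^sup>L lborel (\<lambda>v. awh \<alpha>0 u0 m v * awh \<alpha>1 u1 n v * weight \<alpha>1 u1 v)"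

definition Kc :: "nat \<Rightarrow> nat \<Rightarrow> real" where
  "Kc n m = 2 powr ((real m - real n) / 2) * (fact m) powr (-1/2) * (fact n) powr (1/2)"

end

theory Submission
  imports Defs "HOL-Probability.Distributions" "HOL-Computational_Algebra.Polynomial"
    "HOL-Computational_Algebra.Formal_Power_Series" "Jordan_Normal_Form.Determinant"
begin

text \<open>The substitution \<open>v = u0 + \<alpha>0 x\<close> turns an entry into the Gaussian integral of
  \<open>H_m(x) H_n(d + e x)\<close> with \<open>e = 1/a\<close>, \<open>d = -b/a\<close>: the weight cancels the second Gaussian.
  Since \<open>H_(m+1) = 2x H_m - H_m'\<close> and the integral of \<open>p'\<close> against \<open>exp(-x^2)\<close> equals that of
  \<open>2x p\<close>, integrating by parts \<open>m\<close> times replaces \<open>H_m\<close> by the \<open>m\<close>-th derivative of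
  \<open>H_n(d + e x)\<close>, which vanishes for \<open>m > n\<close> and is a multiple of \<open>H_(n-m)(d + e x)\<close> otherwise.
  Finally the integrals of \<open>H_k(d + e x)\<close> satisfy the three-term recurrence of \<open>sqrt pi * k!\<close>
  times the Taylor coefficients of \<open>exp(2d z + (e^2 - 1) z^2)\<close>, and expanding this product of two
  exponentials gives the stated sum.\<close>

definition gauss_moment :: "nat \<Rightarrow> real" where
  "gauss_moment j = (if even j then sqrt pi * (fact j / (2 ^ j * fact (j div 2))) else 0)"

lemma has_bochner_integral_gauss_moment:
  "has_bochner_integral lborel (\<lambda>x::real. x ^ j * exp (- x\<^sup>2)) (gauss_moment j)"
proof (cases "even j")
  case True
  then obtain k where k: "j = 2 * k" by (auto elim: evenE)
  have "has_bochner_integral lborel (\<lambda>x::real. exp (-x\<^sup>2) * x ^ (2 * k))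
      (2 *\<^sub>R ((sqrt pi / 2) * (fact (2 * k) / (2 ^ (2 * k) * fact k))))"
    by (rule has_bochner_integral_even_function[OF gaussian_moment_even_pos[where k=k]]) simp
  then show ?thesis using k by (simp add: gauss_moment_def mult.commute)
next
  case False
  then obtain k where k: "j = 2 * k + 1" by (auto elim: oddE)
  have "has_bochner_integral lborel (\<lambda>x::real. exp (-x\<^sup>2) * x ^ (2 * k + 1)) 0"
    using gaussian_moment_odd_pos by (rule has_bochner_integral_odd_function) simp
  then show ?thesis using k False by (simp add: gauss_moment_def mult.commute)
qed

lemma gauss_moment_Suc_Suc: "2 * gauss_moment (Suc (Suc j)) = real (Suc j) * gauss_moment j"
proof (cases "even j")
  case True
  then obtain k where k: "j = 2 * k" by (auto elim: evenE)
  have "(2 * k + 2) div 2 = Suc k" by simp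
  moreover have "fact (2 * k + 2) = real (2 * k + 2) * real (2 * k + 1) * (fact (2 * k) :: real)"
    by (simp add: algebra_simps)
  moreover have "(2::real) ^ (2 * k + 2) = 4 * 2 ^ (2 * k)" by (simp add: power_add)
  ultimately show ?thesis using k
    by (simp add: gauss_moment_def divide_simps del: of_nat_Suc) (simp add: algebra_simps)
next
  case False
  then show ?thesis by (simp add: gauss_moment_def)
qed

definition gauss_integral :: "real poly \<Rightarrow> real" where
  "gauss_integral p = integral\<^sup>L lborel (\<lambda>x. poly p x * exp (- x\<^sup>2))"

lemma has_bochner_integral_poly_gaussian:
  "has_bochner_integral lborel (\<lambda>x. poly p x * exp (- x\<^sup>2)) (\<Sum>i\<le>degree p. coeff p i * gauss_moment i)"
proof -
  have "has_bochner_integral lborel (\<lambda>x. \<Sum>i\<le>degree p. coeff p i * (x ^ i * exp (- x\<^sup>2)))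
      (\<Sum>i\<le>degree p. coeff p i * gauss_moment i)"
    by (intro has_bochner_integral_sum has_bochner_integral_mult_right
        has_bochner_integral_gauss_moment)
  then show ?thesis by (simp add: poly_altdef sum_distrib_right mult.assoc)
qed

lemma integrable_poly_gaussian: "integrable lborel (\<lambda>x. poly (p :: real poly) x * exp (- x\<^sup>2))"
  using has_bochner_integral_poly_gaussian[of p] by (simp add: has_bochner_integral_iff)

lemma gauss_integral_add: "gauss_integral (p + q) = gauss_integral p + gauss_integral q"
  unfolding gauss_integral_def
  by (simp add: distrib_right integrable_poly_gaussian)

lemma gauss_integral_smult: "gauss_integral (Polynomial.smult c p) = c * gauss_integral p"
  unfolding gauss_integral_def by (simp add: mult.assoc)

lemma gauss_integral_pCons_0_smult:
  "gauss_integral (pCons 0 (Polynomial.smult c p)) = c * gauss_integral (pCons 0 p)"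
  using gauss_integral_smult[of c "pCons 0 p"] by simp

lemma gauss_integral_diff: "gauss_integral (p - q) = gauss_integral p - gauss_integral q"
  using gauss_integral_add[of p "- q"] gauss_integral_smult[of "-1" q] by simp

lemma gauss_integral_0 [simp]: "gauss_integral 0 = 0"
  unfolding gauss_integral_def by simp

lemma gauss_integral_sum: "gauss_integral (\<Sum>i\<in>A. f i) = (\<Sum>i\<in>A. gauss_integral (f i))"
  by (induction A rule: infinite_finite_induct) (auto simp: gauss_integral_add)

lemma gauss_integral_monom: "gauss_integral (monom c n) = c * gauss_moment n"
proof -
  have "has_bochner_integral lborel (\<lambda>x. poly (monom c n) x * exp (- x\<^sup>2)) (c * gauss_moment n)"
    using has_bochner_integral_mult_right[OF has_bochner_integral_gauss_moment, of c n]
    by (simp add: poly_monom mult.assoc)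
  then show ?thesis
    unfolding gauss_integral_def by (rule has_bochner_integral_integral_eq)
qed

lemma gauss_integral_1: "gauss_integral 1 = sqrt pi"
  using gauss_integral_monom[of 1 0] by (simp add: gauss_moment_def)

text \<open>Integration by parts against \<open>e\<^sup>-\<^sup>x\<^sup>2\<close>, obtained from the moment recurrence.\<close>

lemma gauss_integral_pderiv_monom:
  "gauss_integral (pderiv (monom c n)) = 2 * gauss_integral (pCons 0 (monom c n))"
proof (cases n)
  case 0
  then show ?thesis by (simp add: pderiv_monom monom_Suc[symmetric] gauss_integral_monom gauss_moment_def)
next
  case (Suc j)
  then show ?thesis
    using gauss_moment_Suc_Suc[of j]
    by (simp add: pderiv_monom monom_Suc[symmetric] gauss_integral_monom)
qed

lemma gauss_integral_pderiv: "gauss_integral (pderiv p) = 2 * gauss_integral (pCons 0 p)"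
proof -
  let ?m = "\<lambda>i. monom (coeff p i) i"
  have "(\<Sum>i\<in>A. pCons 0 (f i)) = pCons 0 (sum f A)" for A and f :: "nat \<Rightarrow> real poly"
    by (induction A rule: infinite_finite_induct) auto
  then have pCons_sum: "pCons 0 p = (\<Sum>i\<le>degree p. pCons 0 (?m i))"
    by (simp add: poly_as_sum_of_monoms)
  have "gauss_integral (pderiv p) = (\<Sum>i\<le>degree p. gauss_integral (pderiv (?m i)))"
    using higher_pderiv_sum[of 1 ?m "{..degree p}"]
    by (simp add: poly_as_sum_of_monoms gauss_integral_sum)
  also have "\<dots> = 2 * gauss_integral (pCons 0 p)"
    by (simp add: gauss_integral_pderiv_monom pCons_sum gauss_integral_sum sum_distrib_left)
  finally show ?thesis .
qed

fun hermite_poly :: "nat \<Rightarrow> real poly" where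
  "hermite_poly 0 = 1"
| "hermite_poly (Suc 0) = [:0, 2:]"
| "hermite_poly (Suc (Suc n)) =
     [:0, 2:] * hermite_poly (Suc n) - Polynomial.smult (2 * real (Suc n)) (hermite_poly n)"

lemma poly_hermite_poly: "poly (hermite_poly n) x = hermite n x"
  by (induction n rule: hermite_poly.induct) (simp_all add: algebra_simps)

lemma pderiv_hermite_poly:
  "pderiv (hermite_poly (Suc n)) = Polynomial.smult (2 * real (Suc n)) (hermite_poly n)"
proof (induction n rule: hermite_poly.induct)
  case (3 k)
  have "pderiv (hermite_poly (Suc (Suc (Suc k)))) =
      [:0, 2:] * Polynomial.smult (2 * real (Suc (Suc k))) (hermite_poly (Suc k)) + hermite_poly (Suc (Suc k)) * [:2:]
      - Polynomial.smult (2 * real (Suc (Suc k))) (Polynomial.smult (2 * real (Suc k)) (hermite_poly k))"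
    using 3 by (simp only: hermite_poly.simps(3)[of "Suc k"] pderiv_diff pderiv_smult pderiv_mult)
      (simp add: pderiv_pCons)
  also have "\<dots> = Polynomial.smult (2 * real (Suc (Suc (Suc k)))) (hermite_poly (Suc (Suc k)))"
    by (rule poly_eq_poly_eq_iff[THEN iffD1]) (simp add: fun_eq_iff algebra_simps)
  finally show ?case .
qed (simp_all add: pderiv_pCons pderiv_mult numeral_2_eq_2)

lemma hermite_poly_Suc: "hermite_poly (Suc m) = [:0, 2:] * hermite_poly m - pderiv (hermite_poly m)"
  by (cases m) (simp_all add: pderiv_hermite_poly)

text \<open>Rodrigues' formula in integrated form: \<open>m\<close> integrations by parts move \<open>H\<^sub>m\<close> onto \<open>q\<close>.\<close>

lemma gauss_integral_hermite_poly_mult: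
  "gauss_integral (hermite_poly m * q) = gauss_integral ((pderiv ^^ m) q)"
proof (induction m arbitrary: q)
  case (Suc m)
  have "hermite_poly (Suc m) * q =
      Polynomial.smult 2 (pCons 0 (hermite_poly m * q)) - pderiv (hermite_poly m) * q"
    by (rule poly_eq_poly_eq_iff[THEN iffD1]) (simp add: fun_eq_iff hermite_poly_Suc algebra_simps)
  then have "gauss_integral (hermite_poly (Suc m) * q) =
      2 * gauss_integral (pCons 0 (hermite_poly m * q)) - gauss_integral (pderiv (hermite_poly m) * q)"
    by (simp only: gauss_integral_diff gauss_integral_smult)
  also have "\<dots> = gauss_integral (hermite_poly m * pderiv q)"
    by (simp add: gauss_integral_pderiv[symmetric] pderiv_mult gauss_integral_add mult.commute)
  finally show ?case
    using Suc.IH by (simp only: funpow_Suc_right o_apply)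
qed simp

lemma poly_hermite_pcompose: "poly (hermite_poly n \<circ>\<^sub>p [:d, e:]) x = hermite n (d + e * x)"
  by (simp add: poly_pcompose poly_hermite_poly mult.commute)

lemma pderiv_hermite_pcompose:
  "pderiv (hermite_poly (Suc n) \<circ>\<^sub>p [:d, e:]) =
    Polynomial.smult (2 * real (Suc n) * e) (hermite_poly n \<circ>\<^sub>p [:d, e:])"
  by (rule poly_eq_poly_eq_iff[THEN iffD1])
    (simp add: fun_eq_iff pderiv_pcompose pderiv_hermite_poly pcompose_smult pderiv_pCons)

lemma higher_pderiv_hermite_pcompose:
  assumes "m \<le> n"
  shows "(pderiv ^^ m) (hermite_poly n \<circ>\<^sub>p [:d, e:]) =
    Polynomial.smult (2 ^ m * e ^ m * fact n / fact (n - m)) (hermite_poly (n - m) \<circ>\<^sub>p [:d, e:])"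
  using assms
proof (induction m)
  case (Suc m)
  then obtain r where r: "n - m = Suc r" "n - Suc m = r"
    by (metis Suc_diff_Suc Suc_le_lessD diff_Suc_Suc)
  have "(fact (Suc r) :: real) = real (Suc r) * fact r" by simp
  then show ?case
    using Suc by (simp add: r pderiv_smult pderiv_hermite_pcompose field_simps del: of_nat_Suc)
qed simp

lemma higher_pderiv_hermite_pcompose_eq_0:
  assumes "n < m"
  shows "(pderiv ^^ m) (hermite_poly n \<circ>\<^sub>p [:d, e:]) = 0"
proof -
  obtain r where m: "m = r + Suc n" using less_imp_Suc_add[OF assms] by auto
  have "(pderiv ^^ Suc n) (hermite_poly n \<circ>\<^sub>p [:d, e:]) = 0"
    using higher_pderiv_hermite_pcompose[of n n d e] by (simp add: pderiv_smult pcompose_1)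
  then show ?thesis unfolding m funpow_add o_apply by simp
qed

definition exp_square_fps :: "real \<Rightarrow> real fps" where
  "exp_square_fps s = Abs_fps (\<lambda>j. if even j then s ^ (j div 2) / fact (j div 2) else 0)"

definition exp_quadratic_fps :: "real \<Rightarrow> real \<Rightarrow> real fps" where
  "exp_quadratic_fps t s = fps_exp t * exp_square_fps s"

lemma exp_square_fps_0 [simp]: "exp_square_fps 0 = 1"
  by (rule fps_ext) (auto simp: exp_square_fps_def elim!: evenE)

lemma fps_deriv_exp_square_fps:
  "fps_deriv (exp_square_fps s) = fps_const (2 * s) * (fps_X * exp_square_fps s)"
proof (rule fps_ext)
  fix n
  show "fps_nth (fps_deriv (exp_square_fps s)) n = fps_nth (fps_const (2 * s) * (fps_X * exp_square_fps s)) n"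
  proof (cases "even n")
    case False
    then obtain i where i: "n = Suc (2 * i)" by (auto elim: oddE)
    have "(fact (Suc i) :: real) = real (Suc i) * fact i" by simp
    moreover have "Suc (Suc (2 * i)) div 2 = Suc i" "real (Suc (Suc (2 * i))) = 2 * real (Suc i)"
      by simp_all
    ultimately show ?thesis
      using i by (simp add: exp_square_fps_def field_simps del: of_nat_Suc fact_Suc)
  qed (cases n, simp_all add: exp_square_fps_def)
qed

lemma exp_quadratic_fps_nth_Suc_Suc:
  "real (Suc (Suc k)) * fps_nth (exp_quadratic_fps t s) (Suc (Suc k)) =
     t * fps_nth (exp_quadratic_fps t s) (Suc k) + 2 * s * fps_nth (exp_quadratic_fps t s) k"
proof -
  have "fps_deriv (exp_quadratic_fps t s) =
      fps_const t * exp_quadratic_fps t s + fps_const (2 * s) * (fps_X * exp_quadratic_fps t s)"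
    by (simp add: exp_quadratic_fps_def fps_deriv_exp_square_fps algebra_simps)
  from arg_cong[where f = "\<lambda>f. fps_nth f (Suc k)", OF this] show ?thesis
    by (simp add: add.commute)
qed

lemma exp_quadratic_fps_nth_0: "fps_nth (exp_quadratic_fps t s) 0 = 1"
  by (simp add: exp_quadratic_fps_def exp_square_fps_def)

lemma exp_quadratic_fps_nth_1: "fps_nth (exp_quadratic_fps t s) (Suc 0) = t"
  by (simp add: exp_quadratic_fps_def fps_mult_nth exp_square_fps_def)

lemma exp_quadratic_fps_0_right_nth: "fps_nth (exp_quadratic_fps t 0) k = t ^ k / fact k"
  by (simp add: exp_quadratic_fps_def)

lemma exp_quadratic_fps_0_left_nth:
  "fps_nth (exp_quadratic_fps 0 s) k = (if even k then s ^ (k div 2) / fact (k div 2) else 0)"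
  by (simp add: exp_quadratic_fps_def exp_square_fps_def)

lemma exp_quadratic_fps_nth_eq_sum:
  assumes "m \<le> n"
  shows "fps_nth (exp_quadratic_fps t s) (n - m) =
    (\<Sum>k\<in>{k. m \<le> k \<and> k \<le> n \<and> even (k - m)}.
       1 / (fact (n - k) * fact ((k - m) div 2)) * t ^ (n - k) * s ^ ((k - m) div 2))"
proof -
  let ?d = "n - m"
  let ?c = "\<lambda>i. t ^ i / fact i * (s ^ ((?d - i) div 2) / fact ((?d - i) div 2))"
  have coeff: "fps_nth (fps_exp t) i * fps_nth (exp_square_fps s) j =
      (if even j then t ^ i / fact i * (s ^ (j div 2) / fact (j div 2)) else 0)" for i j
    by (simp add: exp_square_fps_def)
  have "fps_nth (exp_quadratic_fps t s) ?d = (\<Sum>i=0..?d. if even (?d - i) then ?c i else 0)"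
    unfolding exp_quadratic_fps_def fps_mult_nth by (simp only: coeff)
  also have "\<dots> = (\<Sum>i\<in>{i\<in>{0..?d}. even (?d - i)}. ?c i)"
    by (rule sum.inter_filter[symmetric]) simp
  also have "\<dots> = (\<Sum>k\<in>{k. m \<le> k \<and> k \<le> n \<and> even (k - m)}.
      1 / (fact (n - k) * fact ((k - m) div 2)) * t ^ (n - k) * s ^ ((k - m) div 2))"
  proof (rule sum.reindex_bij_witness[where i = "\<lambda>k. n - k" and j = "\<lambda>k. n - k"])
    fix i assume "i \<in> {i\<in>{0..?d}. even (?d - i)}"
    then have "n - i - m = ?d - i" "n - (n - i) = i" by auto
    then show "n - (n - i) = i" "n - i \<in> {k. m \<le> k \<and> k \<le> n \<and> even (k - m)}"
      "1 / (fact (n - (n - i)) * fact ((n - i - m) div 2)) * t ^ (n - (n - i)) * s ^ ((n - i - m) div 2)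
        = ?c i"
      using \<open>i \<in> _\<close> assms by auto
  next
    fix k assume "k \<in> {k. m \<le> k \<and> k \<le> n \<and> even (k - m)}"
    moreover have "?d - (n - k) = k - m" using calculation by auto
    ultimately show "n - (n - k) = k" "n - k \<in> {i\<in>{0..?d}. even (?d - i)}" by auto
  qed
  finally show ?thesis .
qed

lemma gauss_integral_hermite_pcompose:
  "gauss_integral (hermite_poly k \<circ>\<^sub>p [:d, e:]) =
    sqrt pi * fact k * fps_nth (exp_quadratic_fps (2 * d) (e\<^sup>2 - 1)) k"
proof (induction k rule: hermite_poly.induct)
  case 1
  then show ?case by (simp add: pcompose_1 gauss_integral_1 exp_quadratic_fps_nth_0)
next
  case 2
  have "hermite_poly 1 \<circ>\<^sub>p [:d, e:] = monom (2 * d) 0 + monom (2 * e) 1"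
    by (rule poly_eq_poly_eq_iff[THEN iffD1])
      (simp add: fun_eq_iff poly_monom poly_pcompose algebra_simps)
  then show ?case
    by (simp add: gauss_integral_add gauss_integral_monom gauss_moment_def exp_quadratic_fps_nth_1)
next
  case (3 k)
  let ?H = "\<lambda>n. hermite_poly n \<circ>\<^sub>p [:d, e:]"
  let ?F = "exp_quadratic_fps (2 * d) (e\<^sup>2 - 1)"
  have H: "?H (Suc (Suc k)) = Polynomial.smult (2 * d) (?H (Suc k))
      + pCons 0 (Polynomial.smult (2 * e) (?H (Suc k))) - Polynomial.smult (2 * real (Suc k)) (?H k)"
    by (rule poly_eq_poly_eq_iff[THEN iffD1])
      (simp add: fun_eq_iff poly_hermite_pcompose algebra_simps del: hermite_poly.simps)
  have "2 * gauss_integral (pCons 0 (?H (Suc k))) = 2 * (real (Suc k) * e * gauss_integral (?H k))"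
    by (simp add: gauss_integral_pderiv[symmetric] pderiv_hermite_pcompose gauss_integral_smult)
  then have "gauss_integral (?H (Suc (Suc k))) =
      2 * d * gauss_integral (?H (Suc k)) + 2 * real (Suc k) * (e\<^sup>2 - 1) * gauss_integral (?H k)"
    unfolding H by (simp add: gauss_integral_add gauss_integral_diff gauss_integral_smult
        gauss_integral_pCons_0_smult power2_eq_square algebra_simps)
  also have "\<dots> = sqrt pi * fact (Suc k) * (2 * d * fps_nth ?F (Suc k) + 2 * (e\<^sup>2 - 1) * fps_nth ?F k)"
    using 3 by (simp add: algebra_simps)
  also have "\<dots> = sqrt pi * fact (Suc (Suc k)) * fps_nth ?F (Suc (Suc k))"
    by (simp only: exp_quadratic_fps_nth_Suc_Suc[symmetric]) (simp add: algebra_simps)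
  finally show ?case .
qed

lemma gauss_integral_hermite_mult_hermite_pcompose:
  "gauss_integral (hermite_poly m * (hermite_poly n \<circ>\<^sub>p [:d, e:])) =
    (if m \<le> n
     then sqrt pi * 2 ^ m * e ^ m * fact n * fps_nth (exp_quadratic_fps (2 * d) (e\<^sup>2 - 1)) (n - m)
     else 0)"
  by (simp add: gauss_integral_hermite_poly_mult higher_pderiv_hermite_pcompose
      higher_pderiv_hermite_pcompose_eq_0 gauss_integral_smult gauss_integral_hermite_pcompose)

definition hermite_norm :: "nat \<Rightarrow> real" where
  "hermite_norm k = (pi * 2 ^ k * fact k) powr (-1/2)"

lemma powr_minus_half: "x > 0 \<Longrightarrow> x powr (-1/2) = 1 / sqrt (x :: real)"
  by (simp add: powr_minus_divide powr_half_sqrt)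

lemma hermite_norm_eq: "hermite_norm k = 1 / sqrt (pi * 2 ^ k * fact k)"
  unfolding hermite_norm_def by (rule powr_minus_half) simp

lemma hermite_norm_mult_eq_Kc: "hermite_norm m * hermite_norm n * pi * 2 ^ m * fact n = Kc n m"
proof -
  have cancel: "1 / (P * A * M) * (1 / (P * B * N)) * P\<^sup>2 * A\<^sup>2 * N\<^sup>2 = A / B * (1 / M) * N"
    if "P > 0" "A > 0" "B > 0" "M > 0" "N > 0" for P A B M N :: real
    using that by (simp add: field_simps power2_eq_square)
  have "hermite_norm m * hermite_norm n * pi * 2 ^ m * fact n =
      1 / (sqrt pi * sqrt (2 ^ m) * sqrt (fact m)) * (1 / (sqrt pi * sqrt (2 ^ n) * sqrt (fact n)))
      * (sqrt pi)\<^sup>2 * (sqrt (2 ^ m))\<^sup>2 * (sqrt (fact n))\<^sup>2"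
    unfolding hermite_norm_eq by (simp add: real_sqrt_mult)
  also have "\<dots> = sqrt (2 ^ m) / sqrt (2 ^ n) * (1 / sqrt (fact m)) * sqrt (fact n)"
    by (rule cancel) auto
  also have "sqrt (2 ^ m) / sqrt (2 ^ n) = (2::real) powr ((real m - real n) / 2)"
    by (simp add: diff_divide_distrib powr_diff powr_half_sqrt_powr powr_realpow)
  also have "1 / sqrt (fact m) = (fact m :: real) powr (-1/2)"
    by (rule powr_minus_half[symmetric]) simp
  also have "sqrt (fact n) = (fact n :: real) powr (1/2)"
    by (simp add: powr_half_sqrt)
  finally show ?thesis
    unfolding Kc_def .
qed

lemma Kc_diag: "Kc n n = 1"
  by (simp add: Kc_def powr_add[symmetric])

lemma awh_mult_weight_affine:
  assumes "\<alpha>0 \<noteq> 0" "\<alpha>1 \<noteq> 0"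
  shows "awh \<alpha>0 u0 m (u0 + \<alpha>0 * x) * awh \<alpha>1 u1 n (u0 + \<alpha>0 * x) * weight \<alpha>1 u1 (u0 + \<alpha>0 * x) =
    hermite_norm m * hermite_norm n * sqrt pi / \<alpha>1 *
    (poly (hermite_poly m * (hermite_poly n \<circ>\<^sub>p [:(u0 - u1) / \<alpha>1, \<alpha>0 / \<alpha>1:])) x * exp (- x\<^sup>2))"
    (is "?lhs = ?c * _")
proof -
  define y where "y = (u0 - u1) / \<alpha>1 + \<alpha>0 / \<alpha>1 * x"
  have "(u0 + \<alpha>0 * x - u0) / \<alpha>0 = x" "(u0 + \<alpha>0 * x - u1) / \<alpha>1 = y"
    using assms unfolding y_def by (simp_all add: field_simps)
  then have "?lhs = (hermite_norm m * hermite m x * exp (- x\<^sup>2)) * (hermite_norm n * hermite n y * exp (- y\<^sup>2))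
      * (sqrt pi / \<alpha>1 * exp (y\<^sup>2))"
    unfolding awh_def weight_def Let_def hermite_norm_def by simp
  also have "\<dots> = ?c * (hermite m x * hermite n y * exp (- x\<^sup>2)) * (exp (- y\<^sup>2) * exp (y\<^sup>2))"
    by (simp add: algebra_simps)
  also have "exp (- y\<^sup>2) * exp (y\<^sup>2) = 1"
    by (simp add: exp_minus)
  finally show ?thesis
    by (simp add: y_def poly_hermite_poly poly_hermite_pcompose)
qed

lemma integrable_awh_mult_weight:
  assumes "\<alpha>0 \<noteq> 0" "\<alpha>1 \<noteq> 0"
  shows "integrable lborel (\<lambda>v. awh \<alpha>0 u0 m v * awh \<alpha>1 u1 n v * weight \<alpha>1 u1 v)"
    (is "integrable lborel ?f")
proof -
  have "integrable lborel (\<lambda>x. hermite_norm m * hermite_norm n * sqrt pi / \<alpha>1 *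
      (poly (hermite_poly m * (hermite_poly n \<circ>\<^sub>p [:(u0 - u1) / \<alpha>1, \<alpha>0 / \<alpha>1:])) x * exp (- x\<^sup>2)))"
    by (intro integrable_mult_right integrable_poly_gaussian)
  then have "integrable lborel (\<lambda>x. ?f (u0 + \<alpha>0 * x))"
    by (simp only: awh_mult_weight_affine[OF assms])
  then show ?thesis
    using lborel_integrable_real_affine_iff[OF assms(1), of ?f u0] by simp
qed

lemma Pent_eq_gauss_integral:
  assumes "\<alpha>0 > 0" "\<alpha>1 > 0"
  shows "Pent \<alpha>0 u0 \<alpha>1 u1 n m = \<alpha>0 / \<alpha>1 * hermite_norm m * hermite_norm n * sqrt pi *
    gauss_integral (hermite_poly m * (hermite_poly n \<circ>\<^sub>p [:(u0 - u1) / \<alpha>1, \<alpha>0 / \<alpha>1:]))"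
proof -
  have "Pent \<alpha>0 u0 \<alpha>1 u1 n m = \<bar>\<alpha>0\<bar> *\<^sub>R
      (\<integral>x. awh \<alpha>0 u0 m (u0 + \<alpha>0 * x) * awh \<alpha>1 u1 n (u0 + \<alpha>0 * x) * weight \<alpha>1 u1 (u0 + \<alpha>0 * x) \<partial>lborel)"
    unfolding Pent_def using assms by (intro lborel_integral_real_affine) simp
  then show ?thesis
    using assms by (simp add: awh_mult_weight_affine gauss_integral_def)
qed

lemma Pent_eq_0:
  assumes "\<alpha>0 > 0" "\<alpha>1 > 0" "n < m"
  shows "Pent \<alpha>0 u0 \<alpha>1 u1 n m = 0"
  using assms by (simp add: Pent_eq_gauss_integral gauss_integral_hermite_mult_hermite_pcompose)

lemma Pent_eq_exp_quadratic_fps_nth: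
  fixes u0 u1 :: real
  assumes "\<alpha>0 > 0" "\<alpha>1 > 0" "m \<le> n"
  defines "a \<equiv> \<alpha>1 / \<alpha>0" and "b \<equiv> (u1 - u0) / \<alpha>0"
  shows "Pent \<alpha>0 u0 \<alpha>1 u1 n m =
    Kc n m * (1 / a ^ (m + 1)) * fps_nth (exp_quadratic_fps (- 2 * b / a) (1 / a\<^sup>2 - 1)) (n - m)"
proof -
  have args: "2 * ((u0 - u1) / \<alpha>1) = - 2 * b / a" "(\<alpha>0 / \<alpha>1)\<^sup>2 - 1 = 1 / a\<^sup>2 - 1"
    using assms(1,2) unfolding a_def b_def by (simp_all add: field_simps power2_eq_square)
  define F where "F = fps_nth (exp_quadratic_fps (2 * ((u0 - u1) / \<alpha>1)) ((\<alpha>0 / \<alpha>1)\<^sup>2 - 1)) (n - m)"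
  have "Pent \<alpha>0 u0 \<alpha>1 u1 n m =
      (hermite_norm m * hermite_norm n * pi * 2 ^ m * fact n) * (\<alpha>0 / \<alpha>1 * (\<alpha>0 / \<alpha>1) ^ m) * F"
    using assms(1-3) unfolding F_def
    by (simp add: Pent_eq_gauss_integral gauss_integral_hermite_mult_hermite_pcompose power_mult_distrib)
  also have "\<alpha>0 / \<alpha>1 * (\<alpha>0 / \<alpha>1) ^ m = 1 / a ^ (m + 1)"
    by (simp add: a_def power_divide)
  also have "F = fps_nth (exp_quadratic_fps (- 2 * b / a) (1 / a\<^sup>2 - 1)) (n - m)"
    unfolding F_def args ..
  finally show ?thesis
    by (simp only: hermite_norm_mult_eq_Kc)
qed

lemma Pent_eq_sum:
  fixes u0 u1 :: real
  assumes "\<alpha>0 > 0" "\<alpha>1 > 0" "m \<le> n"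
  defines "a \<equiv> \<alpha>1 / \<alpha>0" and "b \<equiv> (u1 - u0) / \<alpha>0"
  shows "Pent \<alpha>0 u0 \<alpha>1 u1 n m =
    Kc n m * (1 / a ^ (m + 1)) *
    (\<Sum>k\<in>{k. m \<le> k \<and> k \<le> n \<and> even (k - m)}.
       1 / (fact (n - k) * fact ((k - m) div 2)) * (- 2 * b / a) ^ (n - k) * (1 / a\<^sup>2 - 1) ^ ((k - m) div 2))"
  unfolding a_def b_def
  by (simp only: Pent_eq_exp_quadratic_fps_nth[OF assms(1-3)] exp_quadratic_fps_nth_eq_sum[OF assms(3)])

lemma Pent_eq_of_same_scale:
  fixes u0 u1 :: real
  assumes "\<alpha> > 0" "m \<le> n"
  defines "b \<equiv> (u1 - u0) / \<alpha>"
  shows "Pent \<alpha> u0 \<alpha> u1 n m = Kc n m * (- 2 * b) ^ (n - m) / fact (n - m)"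
  using Pent_eq_exp_quadratic_fps_nth[OF assms(1,1,2)] assms(1)
  by (simp add: b_def exp_quadratic_fps_0_right_nth)

lemma Pent_eq_of_same_center:
  assumes "\<alpha>0 > 0" "\<alpha>1 > 0" "m \<le> n"
  defines "a \<equiv> \<alpha>1 / \<alpha>0"
  shows "Pent \<alpha>0 u \<alpha>1 u n m =
    (if even (n - m)
     then Kc n m * (1 / a ^ (m + 1)) * (1 / fact ((n - m) div 2)) * (1 / a\<^sup>2 - 1) ^ ((n - m) div 2)
     else 0)"
  using Pent_eq_exp_quadratic_fps_nth[OF assms(1-3)]
  by (simp add: a_def exp_quadratic_fps_0_left_nth)

lemma invertible_mat_lower_triangular:
  assumes "\<And>i j. i < j \<Longrightarrow> j < n \<Longrightarrow> f i j = 0"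
    and "\<And>i. i < n \<Longrightarrow> f i i \<noteq> (0::'a::field)"
  shows "invertible_mat (mat n n (\<lambda>(i, j). f i j))"
proof -
  let ?A = "mat n n (\<lambda>(i, j). f i j)"
  have A: "?A \<in> carrier_mat n n" by simp
  have "det ?A = prod_list (diag_mat ?A)"
    by (rule det_lower_triangular[OF _ A]) (simp add: assms(1))
  then have "det ?A \<noteq> 0"
    using assms(2) by (auto simp: diag_mat_def prod_list_zero_iff)
  from det_non_zero_imp_unit[OF A this, of "()"]
  obtain B where "B \<in> carrier_mat n n" "B * ?A = 1\<^sub>m n" "?A * B = 1\<^sub>m n"
    by (auto simp: Units_def ring_mat_def)
  then show ?thesis
    unfolding invertible_mat_def inverts_mat_def using A by auto
qed

theorem mainTheorem2:
  fixes \<alpha>0 \<alpha>1 u0 u1 :: real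
  assumes "\<alpha>0 > 0" "\<alpha>1 > 0"
  defines "a \<equiv> \<alpha>1 / \<alpha>0" and "b \<equiv> (u1 - u0) / \<alpha>0"
  shows
    "(\<forall>n m. integrable lborel (\<lambda>v. awh \<alpha>0 u0 m v * awh \<alpha>1 u1 n v * weight \<alpha>1 u1 v))
     \<and> (\<forall>n m. n < m \<longrightarrow> Pent \<alpha>0 u0 \<alpha>1 u1 n m = 0)
     \<and> (\<forall>n m. m \<le> n \<longrightarrow> Pent \<alpha>0 u0 \<alpha>1 u1 n m =
          Kc n m * (1 / a ^ (m + 1)) *
          (\<Sum>k\<in>{k. m \<le> k \<and> k \<le> n \<and> even (k - m)}.
             1 / (fact (n - k) * fact ((k - m) div 2)) * (- 2 * b / a) ^ (n - k)
             * (1 / a\<^sup>2 - 1) ^ ((k - m) div 2)))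
     \<and> (a = 1 \<longrightarrow> (\<forall>n m. m \<le> n \<longrightarrow>
          Pent \<alpha>0 u0 \<alpha>1 u1 n m = Kc n m * (- 2 * b) ^ (n - m) / fact (n - m)))
     \<and> (b = 0 \<longrightarrow> (\<forall>n m. m \<le> n \<longrightarrow>
          Pent \<alpha>0 u0 \<alpha>1 u1 n m =
            (if even (n - m)
             then Kc n m * (1 / a ^ (m + 1)) * (1 / fact ((n - m) div 2))
                  * (1 / a\<^sup>2 - 1) ^ ((n - m) div 2)
             else 0)))
     \<and> (\<forall>N::nat.
          (\<forall>n m. n \<le> N \<longrightarrow> m \<le> N \<longrightarrow> n < m \<longrightarrow> Pent \<alpha>0 u0 \<alpha>1 u1 n m = 0)
          \<and> (\<forall>n \<le> N. Pent \<alpha>0 u0 \<alpha>1 u1 n n = 1 / a ^ (n + 1)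
                      \<and> 1 / a ^ (n + 1) = (\<alpha>0 / \<alpha>1) ^ (n + 1)
                      \<and> Pent \<alpha>0 u0 \<alpha>1 u1 n n > 0)
          \<and> invertible_mat (mat (N + 1) (N + 1) (\<lambda>(n, m). Pent \<alpha>0 u0 \<alpha>1 u1 n m)))"
proof -
  have a_pos: "a > 0" using assms(1,2) by (simp add: a_def)
  have diag: "Pent \<alpha>0 u0 \<alpha>1 u1 n n = 1 / a ^ (n + 1)" for n
    using Pent_eq_exp_quadratic_fps_nth[OF assms(1,2) order.refl, folded a_def]
    by (simp add: Kc_diag exp_quadratic_fps_nth_0)
  have "invertible_mat (mat (N + 1) (N + 1) (\<lambda>(n, m). Pent \<alpha>0 u0 \<alpha>1 u1 n m))" for N
    using a_pos by (intro invertible_mat_lower_triangular) (auto simp: Pent_eq_0[OF assms(1,2)] diag)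
  moreover have "1 / a ^ (n + 1) = (\<alpha>0 / \<alpha>1) ^ (n + 1)" for n
    by (simp add: a_def power_divide)
  moreover have "a = 1 \<Longrightarrow> \<alpha>1 = \<alpha>0" "b = 0 \<Longrightarrow> u1 = u0"
    using assms(1,2) by (simp_all add: a_def b_def)
  ultimately show ?thesis
    using a_pos integrable_awh_mult_weight[of \<alpha>0 \<alpha>1] Pent_eq_0[OF assms(1,2)]
      Pent_eq_sum[OF assms(1,2), folded a_def b_def] Pent_eq_of_same_scale[OF assms(1)]
      Pent_eq_of_same_center[OF assms(1,2), folded a_def] assms(1,2)
    by (auto simp: diag b_def)
qed

end
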